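(* Let $\mathbf v_1,\mathbf v_2,\mathbf v_3,\mathbf v_4$ be decorated Lagrangians in $\mathbf R^{2n}$ such that $\mathbf v_1$ and $\mathbf v_3$ are transverse. Then $$\Lambda_{24}=\Lambda_{23}\Lambda_{13}^{-1}\Lambda_{14}+\Lambda_{21}\Lambda_{31}^{-1}\Lambda_{34}.$$
   Context: $\mathbf R^{2n}$ carries the standard symplectic form $\omega(x,y)={}^T x\begin{pmatrix}0&\mathrm{Id}\\-\mathrm{Id}&0\end{pmatrix}y$. A decorated Lagrangian is a pair $(L,\mathbf v)$ with $L$ a Lagrangian subspace ($n$-dimensional, $\omega|_L=0$) and $\mathbf v=(v_1,\dots,v_n)$ a basis of $L$, denoted by $\mathbf v$. Decorated Lagrangians are transverse if their Lagrangians intersect trivially. The symplectic $\Lambda$-length is $\Lambda_{ij}=(\omega(v_{i,k},v_{j,l}))_{k,l=1,\dots,n}$, an $n\times n$ matrix, invertible iff $\mathbf v_i,\mathbf v_j$ are transverse. *)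

theory Defs
  imports "HOL-Analysis.Analysis"
begin

text \<open>R^{2n} is modelled as pairs (q, p) of vectors in R^n (index type 'n with CARD('n) = n);
  the pair (q, p) corresponds to the column vector with first block q and second block p.\<close>

definition symp :: "((real^'n) \<times> (real^'n)) \<Rightarrow> ((real^'n) \<times> (real^'n)) \<Rightarrow> real" where
  "symp x y = fst x \<bullet> snd y - snd x \<bullet> fst y"

definition lagrangian :: "((real^'n) \<times> (real^'n)) set \<Rightarrow> bool" where
  "lagrangian L \<longleftrightarrow> subspace L \<and> dim L = CARD('n) \<and> (\<forall>x\<in>L. \<forall>y\<in>L. symp x y = 0)"

definition decorated_lagrangian :: "((real^'n) \<times> (real^'n)) set \<Rightarrow> ('n \<Rightarrow> (real^'n) \<times> (real^'n)) \<Rightarrow> bool" where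
  "decorated_lagrangian L v \<longleftrightarrow> lagrangian L \<and> inj v \<and> independent (range v) \<and> span (range v) = L"

definition transverse :: "('n \<Rightarrow> (real^'n) \<times> (real^'n)) \<Rightarrow> ('n \<Rightarrow> (real^'n) \<times> (real^'n)) \<Rightarrow> bool" where
  "transverse v w \<longleftrightarrow> span (range v) \<inter> span (range w) = {0}"

definition Lambda :: "('n \<Rightarrow> (real^'n) \<times> (real^'n)) \<Rightarrow> ('n \<Rightarrow> (real^'n) \<times> (real^'n)) \<Rightarrow> real^'n^'n" where
  "Lambda v w = (\<chi> k l. symp (v k) (w l))"

end

theory Submission
  imports Defs
begin

text \<open>Transverse Lagrangians L1 and L3 are complementary, so every vector of the family v4
  decomposes as v4 = v1 A + v3 B for coefficient matrices A and B. Since the pairing is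
  bilinear, Lambda x v4 = Lambda x v1 ** A + Lambda x v3 ** B for every family x; since
  Lagrangians are isotropic this gives Lambda v1 v4 = Lambda v1 v3 ** B and
  Lambda v3 v4 = Lambda v3 v1 ** A. Non-degeneracy of the symplectic form makes Lambda v1 v3
  and Lambda v3 v1 invertible, so A and B can be solved for and substituted into
  Lambda v2 v4 = Lambda v2 v1 ** A + Lambda v2 v3 ** B.\<close>

lemma linear_symp_left: "linear (\<lambda>y. symp y x)"
  by (intro linearI) (simp_all add: symp_def inner_add_left algebra_simps)

lemma symp_add_right: "symp x (y + z) = symp x y + symp x z"
  by (simp add: symp_def inner_add_right inner_add_left)

lemma symp_sum_scaleR_right: "symp x (\<Sum>m\<in>A. c m *\<^sub>R y m) = (\<Sum>m\<in>A. c m * symp x (y m))"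
  by (simp add: symp_def fst_sum snd_sum inner_sum_right inner_sum_left sum_subtractf
      right_diff_distrib)

lemma symp_nondegenerate:
  assumes "\<And>y. symp y x = 0"
  shows "x = 0"
proof -
  have "symp (0, fst x) x = 0" "symp (snd x, 0) x = 0"
    using assms by auto
  then have "fst x \<bullet> fst x = 0" "snd x \<bullet> snd x = 0"
    by (auto simp: symp_def)
  then show ?thesis
    by (simp add: prod_eq_iff)
qed

lemma span_range_finite:
  fixes v :: "'i::finite \<Rightarrow> 'a::real_vector"
  shows "span (range v) = range (\<lambda>c. \<Sum>m\<in>UNIV. c m *\<^sub>R v m)"
proof (rule antisym)
  have "v i \<in> range (\<lambda>c. \<Sum>m\<in>UNIV. c m *\<^sub>R v m)" for i
    by (rule range_eqI[of _ _ "\<lambda>m. if m = i then 1 else 0"])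
      (simp add: if_distrib[of "\<lambda>r. r *\<^sub>R _"] cong: if_cong)
  then have "range v \<subseteq> range (\<lambda>c. \<Sum>m\<in>UNIV. c m *\<^sub>R v m)"
    by blast
  moreover have "subspace (range (\<lambda>c. \<Sum>m\<in>UNIV. c m *\<^sub>R v m))"
  proof (unfold subspace_def, safe)
    show "0 \<in> range (\<lambda>c. \<Sum>m\<in>UNIV. c m *\<^sub>R v m)"
      by (rule image_eqI[of _ _ "\<lambda>_. 0"]) simp_all
    show "(\<Sum>m\<in>UNIV. c m *\<^sub>R v m) + (\<Sum>m\<in>UNIV. d m *\<^sub>R v m)
        \<in> range (\<lambda>c. \<Sum>m\<in>UNIV. c m *\<^sub>R v m)" for c d
      by (rule image_eqI[of _ _ "\<lambda>m. c m + d m"]) (simp_all add: scaleR_add_left sum.distrib)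
    show "a *\<^sub>R (\<Sum>m\<in>UNIV. c m *\<^sub>R v m) \<in> range (\<lambda>c. \<Sum>m\<in>UNIV. c m *\<^sub>R v m)" for a c
      by (rule image_eqI[of _ _ "\<lambda>m. a * c m"]) (simp_all add: scaleR_sum_right)
  qed
  ultimately show "span (range v) \<subseteq> range (\<lambda>c. \<Sum>m\<in>UNIV. c m *\<^sub>R v m)"
    by (rule span_minimal)
  show "range (\<lambda>c. \<Sum>m\<in>UNIV. c m *\<^sub>R v m) \<subseteq> span (range v)"
    by (auto intro!: span_sum span_scale intro: span_base)
qed

lemma independent_range_sum_eq_0:
  fixes v :: "'i::finite \<Rightarrow> 'a::real_vector"
  assumes "inj v" "independent (range v)" "(\<Sum>m\<in>UNIV. c m *\<^sub>R v m) = 0"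
  shows "c m = 0"
proof -
  have indep: "u w = 0" if "(\<Sum>w\<in>range v. u w *\<^sub>R w) = 0" "w \<in> range v" for u w
    using assms(2) finite_imageI[OF finite_class.finite_UNIV, of v] that
    unfolding independent_explicit_module by blast
  have "(\<Sum>w\<in>range v. c (inv v w) *\<^sub>R w) = 0"
    using assms(3) by (simp add: sum.reindex[OF assms(1)] inv_f_f[OF assms(1)])
  then have "c (inv v (v m)) = 0"
    by (rule indep) simp
  then show ?thesis
    by (simp add: inv_f_f[OF assms(1)])
qed

lemma complementary_subspaces_sum_UNIV:
  fixes S T :: "'a::euclidean_space set"
  assumes "subspace S" "subspace T" "S \<inter> T = {0}" "dim S + dim T = DIM('a)"
  shows "{x + y |x y. x \<in> S \<and> y \<in> T} = UNIV"
proof -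
  have "dim {x + y |x y. x \<in> S \<and> y \<in> T} = DIM('a)"
    using dim_sums_Int[OF assms(1,2)] assms(3,4) by simp
  then have "span {x + y |x y. x \<in> S \<and> y \<in> T} = UNIV"
    by (simp add: dim_eq_full)
  then show ?thesis
    using span_eq_iff[THEN iffD2, OF subspace_sums[OF assms(1,2)]] by simp
qed

lemma decorated_lagrangian_isotropic:
  assumes "decorated_lagrangian L v" "x \<in> span (range v)" "y \<in> span (range v)"
  shows "symp x y = 0"
proof -
  have "\<forall>x\<in>L. \<forall>y\<in>L. symp x y = 0" "span (range v) = L"
    using assms(1) by (simp_all add: decorated_lagrangian_def lagrangian_def)
  then show ?thesis
    using assms(2,3) by blast
qed

lemma transverse_sym: "transverse v w \<Longrightarrow> transverse w v"
  by (auto simp: transverse_def)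

lemma transverse_span_UNIV:
  fixes v w :: "'n \<Rightarrow> (real^'n) \<times> (real^'n)"
  assumes "decorated_lagrangian L v" "decorated_lagrangian M w" "transverse v w"
  shows "span (range v \<union> range w) = UNIV"
proof -
  have "subspace L" "dim L = CARD('n)" "L = span (range v)"
       "subspace M" "dim M = CARD('n)" "M = span (range w)"
    using assms(1,2) by (auto simp: decorated_lagrangian_def lagrangian_def)
  moreover have "DIM((real^'n) \<times> (real^'n)) = CARD('n) + CARD('n)"
    by simp
  ultimately show ?thesis
    using complementary_subspaces_sum_UNIV[of L M] assms(3)
    by (simp add: span_Un transverse_def)
qed

lemma transverse_decomposition:
  fixes u v w :: "'n \<Rightarrow> (real^'n) \<times> (real^'n)"
  assumes "decorated_lagrangian L v" "decorated_lagrangian M w" "transverse v w"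
  shows "\<exists>A B. u = (\<lambda>l. (\<Sum>m\<in>UNIV. A $ m $ l *\<^sub>R v m) + (\<Sum>m\<in>UNIV. B $ m $ l *\<^sub>R w m))"
proof -
  have "\<exists>a b. u l = (\<Sum>m\<in>UNIV. a m *\<^sub>R v m) + (\<Sum>m\<in>UNIV. b m *\<^sub>R w m)" for l
  proof -
    have "u l \<in> span (range v \<union> range w)"
      using transverse_span_UNIV[OF assms] by simp
    then obtain p q where "u l = p + q" "p \<in> span (range v)" "q \<in> span (range w)"
      unfolding span_Un by blast
    then show ?thesis
      unfolding span_range_finite by blast
  qed
  then obtain a b where "\<And>l. u l = (\<Sum>m\<in>UNIV. a l m *\<^sub>R v m) + (\<Sum>m\<in>UNIV. b l m *\<^sub>R w m)"
    by (metis (no_types))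
  then show ?thesis
    by (intro exI[of _ "\<chi> m l. a l m"] exI[of _ "\<chi> m l. b l m"]) (simp add: fun_eq_iff)
qed

lemma Lambda_decomposition_right:
  "Lambda x (\<lambda>l. (\<Sum>m\<in>UNIV. A $ m $ l *\<^sub>R v m) + (\<Sum>m\<in>UNIV. B $ m $ l *\<^sub>R w m))
     = Lambda x v ** A + Lambda x w ** B"
  by (simp add: vec_eq_iff Lambda_def matrix_matrix_mult_def symp_add_right
      symp_sum_scaleR_right mult.commute)

lemma Lambda_self_eq_0: "decorated_lagrangian L v \<Longrightarrow> Lambda v v = 0"
  by (simp add: vec_eq_iff Lambda_def decorated_lagrangian_isotropic span_base)

lemma Lambda_invertible:
  fixes v w :: "'n \<Rightarrow> (real^'n) \<times> (real^'n)"
  assumes "decorated_lagrangian L v" "decorated_lagrangian M w" "transverse v w"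
  shows "invertible (Lambda v w)"
proof -
  have "c = 0" if c: "Lambda v w *v c = 0" for c
  proof -
    define x where "x = (\<Sum>l\<in>UNIV. c $ l *\<^sub>R w l)"
    have "symp (v k) x = 0" for k
      using c by (simp add: vec_eq_iff x_def Lambda_def matrix_vector_mult_def
          symp_sum_scaleR_right mult.commute)
    moreover have "symp (w k) x = 0" for k
      using assms(2) by (rule decorated_lagrangian_isotropic)
        (auto simp: x_def intro!: span_base span_sum span_scale)
    ultimately have "range v \<union> range w \<subseteq> {y. symp y x = 0}"
      by auto
    then have "span (range v \<union> range w) \<subseteq> {y. symp y x = 0}"
      using linear_subspace_kernel[OF linear_symp_left] by (rule span_minimal)
    then have "x = 0"
      using transverse_span_UNIV[OF assms] by (auto intro: symp_nondegenerate)
    then show "c = 0"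
      using assms(2) independent_range_sum_eq_0[of w "\<lambda>l. c $ l"]
      by (auto simp: x_def vec_eq_iff decorated_lagrangian_def)
  qed
  then show ?thesis
    by (simp add: invertible_left_inverse matrix_left_invertible_ker)
qed

lemma matrix_inv_mult_cancel_left:
  fixes A :: "'a::field^'n^'n"
  assumes "invertible A"
  shows "matrix_inv A ** (A ** B) = B"
proof -
  have "matrix_inv A ** A = mat 1"
    using assms unfolding invertible_def matrix_inv_def by (rule someI2_ex) auto
  then show ?thesis
    by (simp add: matrix_mul_assoc)
qed

theorem proposition3p17:
  fixes L1 L2 L3 L4 :: "((real^'n) \<times> (real^'n)) set"
    and v1 v2 v3 v4 :: "'n \<Rightarrow> (real^'n) \<times> (real^'n)"
  assumes "decorated_lagrangian L1 v1" "decorated_lagrangian L2 v2"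
    and "decorated_lagrangian L3 v3" "decorated_lagrangian L4 v4"
    and "transverse v1 v3"
  shows "Lambda v2 v4 =
           Lambda v2 v3 ** matrix_inv (Lambda v1 v3) ** Lambda v1 v4
         + Lambda v2 v1 ** matrix_inv (Lambda v3 v1) ** Lambda v3 v4"
proof -
  obtain A B
    where v4: "v4 = (\<lambda>l. (\<Sum>m\<in>UNIV. A $ m $ l *\<^sub>R v1 m) + (\<Sum>m\<in>UNIV. B $ m $ l *\<^sub>R v3 m))"
    using transverse_decomposition[OF assms(1,3,5)] by blast
  have "Lambda v1 v4 = Lambda v1 v3 ** B" "Lambda v3 v4 = Lambda v3 v1 ** A"
    "Lambda v2 v4 = Lambda v2 v1 ** A + Lambda v2 v3 ** B"
    unfolding v4 Lambda_decomposition_right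
    by (simp_all add: Lambda_self_eq_0[OF assms(1)] Lambda_self_eq_0[OF assms(3)])
  moreover note Lambda_invertible[OF assms(1,3,5)]
    Lambda_invertible[OF assms(3,1) transverse_sym[OF assms(5)]]
  ultimately show ?thesis
    by (simp add: matrix_inv_mult_cancel_left add.commute flip: matrix_mul_assoc)
qed

end
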